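(* Let $A\in\mathbb{R}^{n\times n}$ be symmetric with rank $r$. (1) Consider the linear program in the variables $H^+,H^-\in\mathbb{R}^{n\times n}$: minimize $\sum_{i,j}(H^+_{ij}+H^-_{ij})$ subject to $A(H^+-H^-)A=A$, $H^+\ge 0$, $H^-\ge 0$. For every extreme point $(H^+,H^-)$ of its feasible region, the matrix $H:=H^+-H^-$ has at most $r^2$ nonzero entries. Moreover this bound is sharp: for all $n\ge r\ge 1$ there is a symmetric $n\times n$ matrix $A$ of rank $r$ for which some extreme solution $H$ of this linear program has exactly $r^2$ nonzero entries. (2) Consider the linear program in the variables $H^+,H^-$ ranging over symmetric $n\times n$ matrices: minimize $\sum_{i,j}(H^+_{ij}+H^-_{ij})$ subject to $A(H^+-H^-)A=A$, $H^+\ge 0$, $H^-\ge 0$ (this is the linear program for $\min\{\|H\|_1: AHA=A,\ H^\top=H\}$). For every extreme point $(H^+,H^-)$ of its feasible region, the matrix $H:=H^+-H^-$ has at most $r^2+r$ nonzero entries. Moreover this bound is sharp for $n-2\ge r\ge 3$: for such $n,r$ there is a symmetric $n\times n$ matrix $A$ of rank $r$ for which some extreme solution $H$ of this linear program has exactly $r^2+r$ nonzero entries.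
   Context: For a matrix $H$, $\|H\|_1=\sum_{i,j}|H_{ij}|$ (the entrywise 1-norm). Inequalities $H\ge 0$ are entrywise. *)

theory Defs
  imports "Jordan_Normal_Form.DL_Rank"
begin

text \<open>Real n x n matrices are JNF matrices in carrier_mat n n; rank is vec_space.rank n.\<close>

definition mat_nonneg :: "real mat \<Rightarrow> bool" where
  "mat_nonneg H \<longleftrightarrow> (\<forall>i < dim_row H. \<forall>j < dim_col H. H $$ (i,j) \<ge> 0)"

definition mat_symmetric :: "real mat \<Rightarrow> bool" where
  "mat_symmetric H \<longleftrightarrow> H = transpose_mat H"

definition nnz :: "real mat \<Rightarrow> nat" where
  "nnz H = card {(i,j). i < dim_row H \<and> j < dim_col H \<and> H $$ (i,j) \<noteq> 0}"

definition feasible1 :: "nat \<Rightarrow> real mat \<Rightarrow> (real mat \<times> real mat) set" where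
  "feasible1 n A = {(P, M). P \<in> carrier_mat n n \<and> M \<in> carrier_mat n n \<and>
      A * (P - M) * A = A \<and> mat_nonneg P \<and> mat_nonneg M}"

definition feasible2 :: "nat \<Rightarrow> real mat \<Rightarrow> (real mat \<times> real mat) set" where
  "feasible2 n A = {(P, M). P \<in> carrier_mat n n \<and> M \<in> carrier_mat n n \<and>
      mat_symmetric P \<and> mat_symmetric M \<and>
      A * (P - M) * A = A \<and> mat_nonneg P \<and> mat_nonneg M}"

definition extreme_point_pair :: "(real mat \<times> real mat) set \<Rightarrow> real mat \<times> real mat \<Rightarrow> bool" where
  "extreme_point_pair S x \<longleftrightarrow> x \<in> S \<and>
     (\<forall>y\<in>S. \<forall>z\<in>S. \<forall>t::real. 0 < t \<and> t < 1 \<and>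
        x = (t \<cdot>\<^sub>m fst y + (1 - t) \<cdot>\<^sub>m fst z, t \<cdot>\<^sub>m snd y + (1 - t) \<cdot>\<^sub>m snd z) \<longrightarrow> y = z)"

end

(*
  At an extreme point (P, M) of either feasible region there is no nonzero direction (DP, DM)
  vanishing off the supports of P and M with A (DP - DM) A = 0: moving by +-e along it would
  stay feasible for small e. Factor A = F G with inner dimension r = rank A. As A is symmetric,
  A D A = F (G D G^T) F^T, so such directions only have to satisfy the r^2 linear equations
  G D G^T = 0, and only r (r + 1) / 2 of them if D is symmetric, in which case D is determined by
  its upper triangle. More unknowns than equations would give a nonzero solution, which bounds
  the number of (upper triangular) entries of the support of (P, M).

  For sharpness take A = V B V^T with B invertible and V an n x r matrix whose leading r x r block
  is the identity. Every H with V^T H V = B^-1 solves A H A = A, and A D A = 0 forces V^T D V = 0,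
  so the positive and negative parts of H form an extreme point as soon as D = 0 is the only
  (symmetric, for the second program) D vanishing where H vanishes with V^T D V = 0. This holds
  for V = [I; 0], B = I + J (J all ones) and H = (I + J)^-1 = I - J / (r + 1) padded with zeros,
  and for the columns e_k + e_r of V, B = I and a symmetric H with r^2 + r nonzero entries.
*)

theory Submission
  imports Defs "Jordan_Normal_Form.DL_Rank_Submatrix"
begin

section \<open>Homogeneous linear systems and rank\<close>

lemma homogeneous_system_nontrivial_solution:
  fixes w :: "'i \<Rightarrow> 'q \<Rightarrow> 'a::field"
  assumes "finite Q" and "finite I" and "card Q < card I"
  shows "\<exists>c. (\<exists>s\<in>I. c s \<noteq> 0) \<and> (\<forall>q\<in>Q. (\<Sum>s\<in>I. c s * w s q) = 0)"
  using assms
proof (induction Q arbitrary: I w rule: finite_induct)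
  case empty
  then obtain s where "s \<in> I" by fastforce
  then show ?case by (intro exI[of _ "\<lambda>_. 1"]) auto
next
  case (insert q Q)
  show ?case
  proof (cases "\<forall>s\<in>I. w s q = 0")
    case True
    obtain c where "\<exists>s\<in>I. c s \<noteq> 0" "\<forall>q'\<in>Q. (\<Sum>s\<in>I. c s * w s q') = 0"
      using insert.IH[of I w] insert.prems insert.hyps by auto
    with True show ?thesis by auto
  next
    case False
    then obtain s0 where s0: "s0 \<in> I" "w s0 q \<noteq> 0" by blast
    \<comment> \<open>Gaussian elimination: use the equation q to eliminate the unknown s0\<close>
    define w' where "w' s q' = w s q' - w s q / w s0 q * w s0 q'" for s q'
    have "card Q < card (I - {s0})"
      using insert.prems insert.hyps s0 by (simp add: card_Diff_singleton)
    then obtain c' where c': "\<exists>s\<in>I - {s0}. c' s \<noteq> 0"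
      "\<forall>q'\<in>Q. (\<Sum>s\<in>I - {s0}. c' s * w' s q') = 0"
      using insert.IH[of "I - {s0}" w'] insert.prems by auto
    define c where "c s = (if s = s0 then - (\<Sum>t\<in>I - {s0}. c' t * w t q) / w s0 q else c' s)" for s
    have sum_split: "(\<Sum>s\<in>I. c s * w s q') = c s0 * w s0 q' + (\<Sum>s\<in>I - {s0}. c' s * w s q')" for q'
      using insert.prems s0 by (simp add: sum.remove c_def)
    have "(\<Sum>s\<in>I. c s * w s q') = 0" if "q' \<in> insert q Q" for q'
    proof (cases "q' = q")
      case True
      then show ?thesis using sum_split s0 by (simp add: c_def)
    next
      case False
      then have "q' \<in> Q" using that by simp
      have "(\<Sum>s\<in>I. c s * w s q') = (\<Sum>s\<in>I - {s0}. c' s * w' s q')"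
        unfolding sum_split w'_def using s0(2)
        by (simp add: c_def sum_subtractf sum_divide_distrib[symmetric] sum_distrib_left
            sum_distrib_right algebra_simps)
      then show ?thesis using c' \<open>q' \<in> Q\<close> by simp
    qed
    moreover have "\<exists>s\<in>I. c s \<noteq> 0" using c' by (auto simp: c_def)
    ultimately show ?thesis by blast
  qed
qed

lemma card_le_if_homogeneous_system_trivial:
  fixes w :: "'i \<Rightarrow> 'q \<Rightarrow> 'a::field"
  assumes "finite Q" and "finite I"
    and "\<And>c. \<forall>q\<in>Q. (\<Sum>s\<in>I. c s * w s q) = 0 \<Longrightarrow> \<forall>s\<in>I. c s = 0"
  shows "card I \<le> card Q"
  using homogeneous_system_nontrivial_solution[OF assms(1,2), of w] assms(3) by force

lemma rank_mult_le:
  fixes F G :: "'a::field mat"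
  assumes F: "F \<in> carrier_mat n r" and G: "G \<in> carrier_mat r m"
  shows "vec_space.rank n (F * G) \<le> r"
proof -
  interpret V: vec_space "TYPE('a)" n .
  define S where "S k = mat n m (\<lambda>(i,j). \<Sum>l<k. F $$ (i,l) * G $$ (l,j))" for k
  have "V.rank (S k) \<le> k" for k
  proof (induction k)
    case 0
    have "S 0 = 0\<^sub>m n m" unfolding S_def by (rule eq_matI) auto
    then show ?case using V.rank_0I by simp
  next
    case (Suc k)
    define R where "R = mat n m (\<lambda>(i,j). F $$ (i,k) * G $$ (k,j))"
    have "S (Suc k) = S k + R" unfolding S_def R_def by (rule eq_matI) auto
    moreover have "V.rank (S k + R) \<le> V.rank (S k) + V.rank R"
      by (rule V.rank_subadditive) (auto simp: S_def R_def)
    moreover have "V.rank R \<le> 1"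
      by (rule V.rank_le_1_product_entries[of _ m "\<lambda>i. F $$ (i,k)" "\<lambda>j. G $$ (k,j)"])
        (auto simp: R_def)
    ultimately show ?case using Suc by simp
  qed
  moreover have "F * G = S r"
    using F G by (intro eq_matI) (auto simp: S_def scalar_prod_def atLeast0LessThan mult.commute)
  ultimately show ?thesis by simp
qed

lemma (in vec_space) col_in_span_maximal_indpt:
  assumes A: "A \<in> carrier_mat n m" and j: "j < m"
    and S: "maximal S (\<lambda>T. T \<subseteq> set (cols A) \<and> lin_indpt T)"
  shows "col A j \<in> span S"
proof -
  have cols: "set (cols A) \<subseteq> carrier_vec n" using A cols_dim by blast
  have SA: "S \<subseteq> set (cols A)" and li: "lin_indpt S" using S unfolding maximal_def by auto
  have SC: "S \<subseteq> carrier_vec n" using SA cols by auto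
  have cj: "col A j \<in> set (cols A)" using j A by (simp add: cols_def)
  show ?thesis
  proof (cases "col A j \<in> S")
    case True
    then show ?thesis using in_own_span[OF SC] by blast
  next
    case False
    have "lin_dep (insert (col A j) S)"
      using S cj SA False unfolding maximal_def by (metis insert_subset subset_insertI)
    then show ?thesis
      using lin_dep_iff_in_span[OF SC li _ False] cj cols by (simp add: Un_commute) blast
  qed
qed

lemma rank_factorization:
  fixes A :: "'a::field mat"
  assumes A: "A \<in> carrier_mat n m"
  obtains F G where "F \<in> carrier_mat n (vec_space.rank n A)"
    and "G \<in> carrier_mat (vec_space.rank n A) m" and "A = F * G"
proof -
  interpret V: vec_space "TYPE('a)" n .
  obtain S where S: "maximal S (\<lambda>T. T \<subseteq> set (cols A) \<and> V.lin_indpt T)"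
    using maximal_exists[of "\<lambda>T. T \<subseteq> set (cols A) \<and> V.lin_indpt T" "card (set (cols A))" "{}"]
    by (meson List.finite_set card_mono empty_iff empty_subsetI V.finite_lin_indpt2 rev_finite_subset)
  have rank: "V.rank A = card S" using V.rank_card_indpt[OF A S] .
  have SA: "S \<subseteq> set (cols A)" using S unfolding maximal_def by auto
  then have SC: "S \<subseteq> carrier_vec n" and fin: "finite S"
    using A cols_dim finite_subset by blast+
  obtain a where a: "\<And>j. j < m \<Longrightarrow> V.lincomb (a j) S = col A j"
    using V.finite_in_span[OF fin SC V.col_in_span_maximal_indpt[OF A _ S]] by metis
  obtain f where f: "bij_betw f {..<card S} S"
    using ex_bij_betw_nat_finite[OF fin] unfolding atLeast0LessThan by blast
  define F where "F = mat n (card S) (\<lambda>(i,k). f k $ i)"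
  define G where "G = mat (card S) m (\<lambda>(k,j). a j (f k))"
  have "A = F * G"
  proof (rule eq_matI)
    fix i j assume "i < dim_row (F * G)" "j < dim_col (F * G)"
    then have i: "i < n" and j: "j < m" by (auto simp: F_def G_def)
    have "A $$ (i,j) = V.lincomb (a j) S $ i" using a[OF j] i j A by simp
    also have "\<dots> = (\<Sum>x\<in>S. a j x * x $ i)" using V.lincomb_index[OF i SC] .
    also have "\<dots> = (\<Sum>k<card S. a j (f k) * f k $ i)"
      using sum.reindex_bij_betw[OF f, of "\<lambda>x. a j x * x $ i"] by simp
    also have "\<dots> = (F * G) $$ (i,j)"
      using i j by (simp add: F_def G_def scalar_prod_def atLeast0LessThan mult.commute)
    finally show "A $$ (i,j) = (F * G) $$ (i,j)" .
  qed (use A in \<open>auto simp: F_def G_def\<close>)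
  moreover have "F \<in> carrier_mat n (V.rank A)" "G \<in> carrier_mat (V.rank A) m"
    by (simp_all add: rank F_def G_def)
  ultimately show thesis using that by blast
qed

lemma rank_ge_leading_minor:
  fixes A :: "'a::field mat"
  assumes A: "A \<in> carrier_mat n m" and "r \<le> n" and "r \<le> m"
    and det: "det (mat r r (\<lambda>(i,j). A $$ (i,j))) \<noteq> 0"
  shows "r \<le> vec_space.rank n A"
proof -
  have pick: "pick {..<r} i = i" if "i < r" for i
  proof -
    have "{a \<in> {..<r}. a < i} = {..<i}" using that by auto
    then show ?thesis using pick_card_in_set[of i "{..<r}"] that by simp
  qed
  have rows: "{i. i < n \<and> i \<in> {..<r}} = {..<r}" and cols: "{j. j < m \<and> j \<in> {..<r}} = {..<r}"
    using assms by auto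
  have "submatrix A {..<r} {..<r} = mat r r (\<lambda>(i,j). A $$ (i,j))"
    unfolding submatrix_def using A rows cols pick by (intro eq_matI) auto
  then show ?thesis
    using vec_space.rank_gt_minor[OF A, of "{..<r}" "{..<r}"] det cols by simp
qed

section \<open>Sandwiches A X A and compressions B X B^T\<close>

lemma mult_sandwich_assoc:
  fixes F G D G' F' :: "'a::comm_ring mat"
  assumes F: "F \<in> carrier_mat n r" and G: "G \<in> carrier_mat r m" and D: "D \<in> carrier_mat m m'"
    and G': "G' \<in> carrier_mat m' r'" and F': "F' \<in> carrier_mat r' n'"
  shows "(F * G) * D * (G' * F') = F * (G * D * G') * F'"
proof -
  have "G * D \<in> carrier_mat r m'" "D * G' \<in> carrier_mat m r'" "G' * F' \<in> carrier_mat m' n'"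
    "G * (D * G') \<in> carrier_mat r r'"
    using F G D G' F' by auto
  then show ?thesis using F G D G' F' by (simp del: mult_carrier_mat)
qed

lemma sandwich_add_smult:
  fixes A X Y :: "'a::comm_ring mat"
  assumes A: "A \<in> carrier_mat n n" and X: "X \<in> carrier_mat n n" and Y: "Y \<in> carrier_mat n n"
  shows "A * (X + t \<cdot>\<^sub>m Y) * A = A * X * A + t \<cdot>\<^sub>m (A * Y * A)"
proof -
  have "A * (X + t \<cdot>\<^sub>m Y) = A * X + t \<cdot>\<^sub>m (A * Y)"
    using A X Y by (simp add: mult_add_distrib_mat[of _ n n] mult_smult_distrib)
  moreover have "(A * X + t \<cdot>\<^sub>m (A * Y)) * A = A * X * A + t \<cdot>\<^sub>m (A * Y * A)"
    using A X Y by (simp add: add_mult_distrib_mat[of _ n n] mult_smult_assoc_mat[of "A * Y" n n])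
  ultimately show ?thesis by simp
qed

lemma sandwich_diff:
  fixes A X Y :: "'a::comm_ring mat"
  assumes A: "A \<in> carrier_mat n n" and X: "X \<in> carrier_mat n n" and Y: "Y \<in> carrier_mat n n"
  shows "A * (X - Y) * A = A * X * A - A * Y * A"
  using A X Y by (simp add: mult_minus_distrib_mat[of _ n n] minus_mult_distrib_mat[of _ n n])

lemma compression_index:
  fixes B D :: "'a::comm_ring mat"
  assumes "B \<in> carrier_mat m n" and "D \<in> carrier_mat n n" and "k < m" and "l < m"
  shows "(B * D * B\<^sup>T) $$ (k,l) = (\<Sum>i<n. \<Sum>j<n. B $$ (k,i) * D $$ (i,j) * B $$ (l,j))"
  using assms by (simp add: scalar_prod_def atLeast0LessThan sum_distrib_left mult.assoc)

lemma compression_transpose_index: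
  fixes V X :: "'a::comm_ring mat"
  assumes "V \<in> carrier_mat n r" and "X \<in> carrier_mat n n" and "k < r" and "l < r"
  shows "(V\<^sup>T * X * V) $$ (k,l) = (\<Sum>i<n. \<Sum>j<n. V $$ (i,k) * X $$ (i,j) * V $$ (j,l))"
  using compression_index[of "V\<^sup>T" r n X k l] assms unfolding transpose_transpose by simp

lemma compression_symmetrize:
  fixes B U :: "'a::comm_ring mat"
  assumes B: "B \<in> carrier_mat m n" and U: "U \<in> carrier_mat n n" and k: "k < m" and l: "l < m"
  shows "(B * (U + U\<^sup>T) * B\<^sup>T) $$ (k,l) = (B * U * B\<^sup>T) $$ (k,l) + (B * U * B\<^sup>T) $$ (l,k)"
proof -
  have "(B * (U + U\<^sup>T) * B\<^sup>T) $$ (k,l)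
      = (\<Sum>i<n. \<Sum>j<n. B $$ (k,i) * (U + U\<^sup>T) $$ (i,j) * B $$ (l,j))"
    using assms by (intro compression_index) auto
  also have "\<dots> = (\<Sum>i<n. \<Sum>j<n. B $$ (k,i) * U $$ (i,j) * B $$ (l,j))
        + (\<Sum>i<n. \<Sum>j<n. B $$ (k,i) * U $$ (j,i) * B $$ (l,j))"
    using U by (simp add: algebra_simps sum.distrib)
  also have "(\<Sum>i<n. \<Sum>j<n. B $$ (k,i) * U $$ (j,i) * B $$ (l,j))
      = (\<Sum>j<n. \<Sum>i<n. B $$ (l,j) * U $$ (j,i) * B $$ (k,i))"
    by (subst sum.swap) (simp add: mult_ac)
  finally show ?thesis
    by (simp only: compression_index[OF B U k l] compression_index[OF B U l k])
qed

definition supported_mat :: "nat \<Rightarrow> (nat \<times> nat) set \<Rightarrow> (nat \<times> nat \<Rightarrow> 'a::zero) \<Rightarrow> 'a mat" where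
  "supported_mat n T c = mat n n (\<lambda>p. if p \<in> T then c p else 0)"

lemma compression_supported_mat:
  fixes B :: "'a::comm_ring mat"
  assumes B: "B \<in> carrier_mat m n" and T: "T \<subseteq> {..<n} \<times> {..<n}" and "k < m" and "l < m"
  shows "(B * supported_mat n T c * B\<^sup>T) $$ (k,l)
    = (\<Sum>p\<in>T. c p * (B $$ (k, fst p) * B $$ (l, snd p)))"
proof -
  have "(B * supported_mat n T c * B\<^sup>T) $$ (k,l)
      = (\<Sum>i<n. \<Sum>j<n. B $$ (k,i) * supported_mat n T c $$ (i,j) * B $$ (l,j))"
    using assms by (intro compression_index) (auto simp: supported_mat_def)
  also have "\<dots> = (\<Sum>p\<in>{..<n} \<times> {..<n}.
      if p \<in> T then c p * (B $$ (k, fst p) * B $$ (l, snd p)) else 0)"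
    by (simp add: supported_mat_def sum.cartesian_product case_prod_beta mult_ac
        if_distrib if_distribR cong: if_cong)
  also have "\<dots> = (\<Sum>p\<in>T. c p * (B $$ (k, fst p) * B $$ (l, snd p)))"
    using T by (simp add: sum.If_cases Int_absorb1)
  finally show ?thesis .
qed

section \<open>Extreme points and feasible directions\<close>

lemma mat_symmetric_iff:
  fixes H :: "real mat"
  assumes "H \<in> carrier_mat n n"
  shows "mat_symmetric H \<longleftrightarrow> (\<forall>i<n. \<forall>j<n. H $$ (i,j) = H $$ (j,i))"
  using assms unfolding mat_symmetric_def
  by (metis (no_types, lifting) carrier_matD eq_matI index_transpose_mat)

lemma mat_nonneg_add_smult:
  fixes P D :: "real mat"
  assumes P: "P \<in> carrier_mat n m" and D: "D \<in> carrier_mat n m" and nonneg: "mat_nonneg P"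
    and supp: "\<forall>i<n. \<forall>j<m. P $$ (i,j) = 0 \<longrightarrow> D $$ (i,j) = 0"
  shows "\<exists>e>0. \<forall>t. \<bar>t\<bar> \<le> e \<longrightarrow> mat_nonneg (P + t \<cdot>\<^sub>m D)"
proof -
  define E where "E = {P $$ (i,j) / \<bar>D $$ (i,j)\<bar> | i j. i < n \<and> j < m \<and> D $$ (i,j) \<noteq> 0}"
  have "E \<subseteq> (\<lambda>(i,j). P $$ (i,j) / \<bar>D $$ (i,j)\<bar>) ` ({..<n} \<times> {..<m})"
    unfolding E_def by auto
  then have fin: "finite E" by (rule finite_subset) auto
  have "x > 0" if "x \<in> E" for x
  proof -
    obtain i j where ij: "i < n" "j < m" "D $$ (i,j) \<noteq> 0"
      and x: "x = P $$ (i,j) / \<bar>D $$ (i,j)\<bar>"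
      using \<open>x \<in> E\<close> unfolding E_def by blast
    have "P $$ (i,j) \<ge> 0" using nonneg P ij unfolding mat_nonneg_def by auto
    moreover have "P $$ (i,j) \<noteq> 0" using supp ij by auto
    ultimately show ?thesis using x ij by simp
  qed
  then have e: "Min (insert 1 E) > 0" using fin by simp
  have "mat_nonneg (P + t \<cdot>\<^sub>m D)" if t: "\<bar>t\<bar> \<le> Min (insert 1 E)" for t
    unfolding mat_nonneg_def
  proof (intro allI impI)
    fix i j assume "i < dim_row (P + t \<cdot>\<^sub>m D)" and "j < dim_col (P + t \<cdot>\<^sub>m D)"
    then have i: "i < n" and j: "j < m" using P D by auto
    have "P $$ (i,j) \<ge> 0" using nonneg P i j unfolding mat_nonneg_def by auto
    moreover have "\<bar>t\<bar> * \<bar>D $$ (i,j)\<bar> \<le> P $$ (i,j)" if "D $$ (i,j) \<noteq> 0"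
    proof -
      have "P $$ (i,j) / \<bar>D $$ (i,j)\<bar> \<in> E" unfolding E_def using i j that by blast
      then have "Min (insert 1 E) \<le> P $$ (i,j) / \<bar>D $$ (i,j)\<bar>" using fin by (intro Min_le) auto
      then have "\<bar>t\<bar> \<le> P $$ (i,j) / \<bar>D $$ (i,j)\<bar>" using t by linarith
      then show ?thesis using that by (simp add: le_divide_eq)
    qed
    moreover have "- (\<bar>t\<bar> * \<bar>D $$ (i,j)\<bar>) \<le> t * D $$ (i,j)"
      by (metis abs_ge_minus_self abs_mult minus_le_iff)
    ultimately show "(P + t \<cdot>\<^sub>m D) $$ (i,j) \<ge> 0"
      using i j P D by (cases "D $$ (i,j) = 0") auto
  qed
  then show ?thesis using e by blast
qed

lemma extreme_point_pair_segment:
  fixes P M DP DM :: "real mat"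
  assumes ext: "extreme_point_pair S (P, M)"
    and P: "P \<in> carrier_mat n m" and M: "M \<in> carrier_mat n m"
    and DP: "DP \<in> carrier_mat n m" and DM: "DM \<in> carrier_mat n m" and "e \<noteq> 0"
    and plus: "(P + e \<cdot>\<^sub>m DP, M + e \<cdot>\<^sub>m DM) \<in> S"
    and minus: "(P + (- e) \<cdot>\<^sub>m DP, M + (- e) \<cdot>\<^sub>m DM) \<in> S"
  shows "DP = 0\<^sub>m n m \<and> DM = 0\<^sub>m n m"
proof -
  have cancel: "D = 0\<^sub>m n m"
    if X: "X \<in> carrier_mat n m" and D: "D \<in> carrier_mat n m"
      and eq: "X + e \<cdot>\<^sub>m D = X + (- e) \<cdot>\<^sub>m D" for X D :: "real mat"
  proof (rule eq_matI)
    fix i j assume "i < dim_row (0\<^sub>m n m)" "j < dim_col (0\<^sub>m n m)"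
    then have "i < n" "j < m" by auto
    then have "e * D $$ (i,j) = - e * D $$ (i,j)"
      using arg_cong[OF eq, of "\<lambda>Y. Y $$ (i,j)"] X D by simp
    then show "D $$ (i,j) = 0\<^sub>m n m $$ (i,j)" using \<open>e \<noteq> 0\<close> \<open>i < n\<close> \<open>j < m\<close> by simp
  qed (use D in auto)
  have mid: "P = (1/2 :: real) \<cdot>\<^sub>m (P + e \<cdot>\<^sub>m DP) + (1 - 1/2) \<cdot>\<^sub>m (P + (- e) \<cdot>\<^sub>m DP)"
    "M = (1/2 :: real) \<cdot>\<^sub>m (M + e \<cdot>\<^sub>m DM) + (1 - 1/2) \<cdot>\<^sub>m (M + (- e) \<cdot>\<^sub>m DM)"
    using P M DP DM by (auto intro!: eq_matI simp: algebra_simps)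
  have "\<forall>y\<in>S. \<forall>z\<in>S. \<forall>t::real. 0 < t \<and> t < 1 \<and>
      (P, M) = (t \<cdot>\<^sub>m fst y + (1 - t) \<cdot>\<^sub>m fst z, t \<cdot>\<^sub>m snd y + (1 - t) \<cdot>\<^sub>m snd z) \<longrightarrow> y = z"
    using ext by (simp add: extreme_point_pair_def)
  from this[rule_format, OF plus minus, of "1/2"]
  have "(P + e \<cdot>\<^sub>m DP, M + e \<cdot>\<^sub>m DM) = (P + (- e) \<cdot>\<^sub>m DP, M + (- e) \<cdot>\<^sub>m DM)"
    using mid by simp
  then show ?thesis using cancel P M DP DM by auto
qed

lemma extreme_point_pair_support_direction:
  fixes P M DP DM :: "real mat"
  assumes ext: "extreme_point_pair S (P, M)"
    and P: "P \<in> carrier_mat n m" and M: "M \<in> carrier_mat n m"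
    and DP: "DP \<in> carrier_mat n m" and DM: "DM \<in> carrier_mat n m"
    and "mat_nonneg P" and "mat_nonneg M"
    and "\<forall>i<n. \<forall>j<m. P $$ (i,j) = 0 \<longrightarrow> DP $$ (i,j) = 0"
    and "\<forall>i<n. \<forall>j<m. M $$ (i,j) = 0 \<longrightarrow> DM $$ (i,j) = 0"
    and closed: "\<And>t. mat_nonneg (P + t \<cdot>\<^sub>m DP) \<Longrightarrow> mat_nonneg (M + t \<cdot>\<^sub>m DM)
      \<Longrightarrow> (P + t \<cdot>\<^sub>m DP, M + t \<cdot>\<^sub>m DM) \<in> S"
  shows "DP = 0\<^sub>m n m \<and> DM = 0\<^sub>m n m"
proof -
  obtain e1 where "e1 > 0" and e1: "\<And>t. \<bar>t\<bar> \<le> e1 \<Longrightarrow> mat_nonneg (P + t \<cdot>\<^sub>m DP)"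
    using mat_nonneg_add_smult[OF P DP] assms by blast
  obtain e2 where "e2 > 0" and e2: "\<And>t. \<bar>t\<bar> \<le> e2 \<Longrightarrow> mat_nonneg (M + t \<cdot>\<^sub>m DM)"
    using mat_nonneg_add_smult[OF M DM] assms by blast
  define e where "e = min e1 e2"
  have "e > 0" using \<open>e1 > 0\<close> \<open>e2 > 0\<close> by (simp add: e_def)
  have "(P + t \<cdot>\<^sub>m DP, M + t \<cdot>\<^sub>m DM) \<in> S" if "\<bar>t\<bar> = e" for t
    using closed e1 e2 that by (simp add: e_def)
  then show ?thesis
    using extreme_point_pair_segment[OF ext P M DP DM, of e] \<open>e > 0\<close> by simp
qed

lemma feasible1_add_smult:
  fixes A P M DP DM :: "real mat"
  assumes "(P, M) \<in> feasible1 n A" and A: "A \<in> carrier_mat n n"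
    and DP: "DP \<in> carrier_mat n n" and DM: "DM \<in> carrier_mat n n"
    and kernel: "A * (DP - DM) * A = 0\<^sub>m n n"
    and "mat_nonneg (P + t \<cdot>\<^sub>m DP)" and "mat_nonneg (M + t \<cdot>\<^sub>m DM)"
  shows "(P + t \<cdot>\<^sub>m DP, M + t \<cdot>\<^sub>m DM) \<in> feasible1 n A"
proof -
  have P: "P \<in> carrier_mat n n" and M: "M \<in> carrier_mat n n" and sol: "A * (P - M) * A = A"
    using assms(1) by (auto simp: feasible1_def)
  have "(P + t \<cdot>\<^sub>m DP) - (M + t \<cdot>\<^sub>m DM) = (P - M) + t \<cdot>\<^sub>m (DP - DM)"
    using P M DP DM by (auto intro!: eq_matI simp: algebra_simps)
  then have "A * ((P + t \<cdot>\<^sub>m DP) - (M + t \<cdot>\<^sub>m DM)) * A = A"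
    using sandwich_add_smult[OF A minus_carrier_mat[OF M, of P] minus_carrier_mat[OF DM, of DP], of t]
      sol kernel A by simp
  then show ?thesis using assms P M DP DM by (simp add: feasible1_def)
qed

lemma feasible2_iff:
  "(P, M) \<in> feasible2 n A \<longleftrightarrow> (P, M) \<in> feasible1 n A \<and> mat_symmetric P \<and> mat_symmetric M"
  by (auto simp: feasible1_def feasible2_def)

lemma support_split:
  fixes P M D :: "real mat"
  assumes P: "P \<in> carrier_mat n n" and D: "D \<in> carrier_mat n n"
    and supp: "\<forall>i<n. \<forall>j<n. P $$ (i,j) = 0 \<and> M $$ (i,j) = 0 \<longrightarrow> D $$ (i,j) = 0"
  obtains DP DM where "DP \<in> carrier_mat n n" and "DM \<in> carrier_mat n n" and "DP - DM = D"
    and "\<forall>i<n. \<forall>j<n. P $$ (i,j) = 0 \<longrightarrow> DP $$ (i,j) = 0"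
    and "\<forall>i<n. \<forall>j<n. M $$ (i,j) = 0 \<longrightarrow> DM $$ (i,j) = 0"
    and "mat_symmetric P \<Longrightarrow> mat_symmetric D \<Longrightarrow> mat_symmetric DP \<and> mat_symmetric DM"
proof -
  define DP where "DP = mat n n (\<lambda>p. if P $$ p = 0 then 0 else D $$ p)"
  define DM where "DM = DP - D"
  have DP: "DP \<in> carrier_mat n n" and DM: "DM \<in> carrier_mat n n"
    using D by (simp_all add: DP_def DM_def minus_carrier_mat)
  moreover have "DP - DM = D" using D by (auto intro!: eq_matI simp: DP_def DM_def)
  moreover have "mat_symmetric DP \<and> mat_symmetric DM"
    if "mat_symmetric P" and "mat_symmetric D"
    using that P D unfolding mat_symmetric_iff[OF DP] mat_symmetric_iff[OF DM]
    by (auto simp: mat_symmetric_iff[OF P] mat_symmetric_iff[OF D] DP_def DM_def)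
  moreover have "\<forall>i<n. \<forall>j<n. P $$ (i,j) = 0 \<longrightarrow> DP $$ (i,j) = 0"
    by (simp add: DP_def)
  moreover have "\<forall>i<n. \<forall>j<n. M $$ (i,j) = 0 \<longrightarrow> DM $$ (i,j) = 0"
    using D supp by (simp add: DP_def DM_def)
  ultimately show thesis using that by blast
qed

lemma extreme_feasible1_kernel:
  fixes A P M D :: "real mat"
  assumes A: "A \<in> carrier_mat n n" and ext: "extreme_point_pair (feasible1 n A) (P, M)"
    and D: "D \<in> carrier_mat n n"
    and supp: "\<forall>i<n. \<forall>j<n. P $$ (i,j) = 0 \<and> M $$ (i,j) = 0 \<longrightarrow> D $$ (i,j) = 0"
    and kernel: "A * D * A = 0\<^sub>m n n"
  shows "D = 0\<^sub>m n n"
proof -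
  have PM: "(P, M) \<in> feasible1 n A" using ext by (simp add: extreme_point_pair_def)
  then have P: "P \<in> carrier_mat n n" and M: "M \<in> carrier_mat n n"
    and nonneg: "mat_nonneg P" "mat_nonneg M" by (auto simp: feasible1_def)
  obtain DP DM where DP: "DP \<in> carrier_mat n n" and DM: "DM \<in> carrier_mat n n"
    and diff: "DP - DM = D" and zero: "\<forall>i<n. \<forall>j<n. P $$ (i,j) = 0 \<longrightarrow> DP $$ (i,j) = 0"
      "\<forall>i<n. \<forall>j<n. M $$ (i,j) = 0 \<longrightarrow> DM $$ (i,j) = 0"
    using support_split[OF P D supp] by blast
  have "DP = 0\<^sub>m n n \<and> DM = 0\<^sub>m n n"
  proof (rule extreme_point_pair_support_direction[OF ext P M DP DM nonneg zero])
    fix t assume "mat_nonneg (P + t \<cdot>\<^sub>m DP)" "mat_nonneg (M + t \<cdot>\<^sub>m DM)"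
    then show "(P + t \<cdot>\<^sub>m DP, M + t \<cdot>\<^sub>m DM) \<in> feasible1 n A"
      using feasible1_add_smult[OF PM A DP DM] kernel diff by simp
  qed
  then show ?thesis using diff by auto
qed

lemma extreme_feasible2_kernel:
  fixes A P M D :: "real mat"
  assumes A: "A \<in> carrier_mat n n" and ext: "extreme_point_pair (feasible2 n A) (P, M)"
    and D: "D \<in> carrier_mat n n" and "mat_symmetric D"
    and supp: "\<forall>i<n. \<forall>j<n. P $$ (i,j) = 0 \<and> M $$ (i,j) = 0 \<longrightarrow> D $$ (i,j) = 0"
    and kernel: "A * D * A = 0\<^sub>m n n"
  shows "D = 0\<^sub>m n n"
proof -
  have PM: "(P, M) \<in> feasible1 n A" and sym: "mat_symmetric P" "mat_symmetric M"
    using ext by (simp_all add: extreme_point_pair_def feasible2_iff)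
  then have P: "P \<in> carrier_mat n n" and M: "M \<in> carrier_mat n n"
    and nonneg: "mat_nonneg P" "mat_nonneg M" by (auto simp: feasible1_def)
  obtain DP DM where DP: "DP \<in> carrier_mat n n" and DM: "DM \<in> carrier_mat n n"
    and diff: "DP - DM = D" and zero: "\<forall>i<n. \<forall>j<n. P $$ (i,j) = 0 \<longrightarrow> DP $$ (i,j) = 0"
      "\<forall>i<n. \<forall>j<n. M $$ (i,j) = 0 \<longrightarrow> DM $$ (i,j) = 0"
    and sym_dir: "mat_symmetric DP" "mat_symmetric DM"
    using support_split[OF P D supp] sym \<open>mat_symmetric D\<close> by metis
  have "DP = 0\<^sub>m n n \<and> DM = 0\<^sub>m n n"
  proof (rule extreme_point_pair_support_direction[OF ext P M DP DM nonneg zero])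
    fix t assume "mat_nonneg (P + t \<cdot>\<^sub>m DP)" "mat_nonneg (M + t \<cdot>\<^sub>m DM)"
    moreover have "mat_symmetric (P + t \<cdot>\<^sub>m DP)" "mat_symmetric (M + t \<cdot>\<^sub>m DM)"
      using P M DP DM sym sym_dir by (simp_all add: mat_symmetric_iff[of _ n])
    ultimately show "(P + t \<cdot>\<^sub>m DP, M + t \<cdot>\<^sub>m DM) \<in> feasible2 n A"
      using feasible1_add_smult[OF PM A DP DM] kernel diff by (simp add: feasible2_iff)
  qed
  then show ?thesis using diff by auto
qed

section \<open>Upper bounds on the support\<close>

lemma nnz_le_card:
  fixes H :: "real mat"
  assumes "H \<in> carrier_mat n m" and "finite T"
    and "\<forall>i<n. \<forall>j<m. H $$ (i,j) \<noteq> 0 \<longrightarrow> (i,j) \<in> T"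
  shows "nnz H \<le> card T"
  unfolding nnz_def using assms by (intro card_mono) auto

lemma sandwich_eq_0_if_compression_eq_0:
  fixes A F G D :: "real mat"
  assumes F: "F \<in> carrier_mat n r" and G: "G \<in> carrier_mat r n" and AFG: "A = F * G"
    and sym: "mat_symmetric A" and D: "D \<in> carrier_mat n n"
    and compression: "G * D * G\<^sup>T = 0\<^sub>m r r"
  shows "A * D * A = 0\<^sub>m n n"
proof -
  have "A = G\<^sup>T * F\<^sup>T"
    using sym F G unfolding mat_symmetric_def AFG by (metis transpose_mult)
  then have "A * D * A = (F * G) * D * (G\<^sup>T * F\<^sup>T)" using AFG by simp
  also have "\<dots> = F * (G * D * G\<^sup>T) * F\<^sup>T"
    using F G D by (intro mult_sandwich_assoc) auto
  also have "\<dots> = 0\<^sub>m n n" using F compression by simp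
  finally show ?thesis .
qed

lemma extreme_feasible1_support_card_le:
  fixes A P M :: "real mat"
  assumes A: "A \<in> carrier_mat n n" and sym: "mat_symmetric A"
    and ext: "extreme_point_pair (feasible1 n A) (P, M)"
  shows "card {(i,j). i < n \<and> j < n \<and> (P $$ (i,j) \<noteq> 0 \<or> M $$ (i,j) \<noteq> 0)}
    \<le> (vec_space.rank n A)\<^sup>2"
proof -
  define r where "r = vec_space.rank n A"
  obtain F G where F: "F \<in> carrier_mat n r" and G: "G \<in> carrier_mat r n" and AFG: "A = F * G"
    using rank_factorization[OF A] unfolding r_def by metis
  define T where "T = {(i,j). i < n \<and> j < n \<and> (P $$ (i,j) \<noteq> 0 \<or> M $$ (i,j) \<noteq> 0)}"
  have T: "T \<subseteq> {..<n} \<times> {..<n}" by (auto simp: T_def)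
  \<comment> \<open>unknowns: the entries of a direction on the support of (P, M);
    equations: the entries of its compression G D G^T\<close>
  have "card T \<le> card ({..<r} \<times> {..<r})"
  proof (rule card_le_if_homogeneous_system_trivial
      [where w = "\<lambda>p q. G $$ (fst q, fst p) * G $$ (snd q, snd p)"])
    fix c assume c: "\<forall>q\<in>{..<r} \<times> {..<r}. (\<Sum>p\<in>T. c p * (G $$ (fst q, fst p) * G $$ (snd q, snd p))) = 0"
    define D where "D = supported_mat n T c"
    have D: "D \<in> carrier_mat n n" by (simp add: D_def supported_mat_def)
    have "(G * D * G\<^sup>T) $$ (k,l) = 0" if "k < r" "l < r" for k l
      using c that unfolding D_def compression_supported_mat[OF G T that] by simp
    then have "G * D * G\<^sup>T = 0\<^sub>m r r" using G D by (intro eq_matI) auto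
    then have "A * D * A = 0\<^sub>m n n"
      by (rule sandwich_eq_0_if_compression_eq_0[OF F G AFG sym D])
    then have "D = 0\<^sub>m n n"
      by (intro extreme_feasible1_kernel[OF A ext D]) (auto simp: D_def supported_mat_def T_def)
    moreover have "D $$ p = c p" if "p \<in> T" for p
      using that T by (auto simp: D_def supported_mat_def)
    ultimately show "\<forall>p\<in>T. c p = 0" using T by fastforce
  qed (use T in \<open>auto intro: finite_subset\<close>)
  then show ?thesis by (simp add: T_def r_def card_cartesian_product power2_eq_square)
qed

lemma extreme_feasible1_nnz_le:
  fixes A P M :: "real mat"
  assumes A: "A \<in> carrier_mat n n" and sym: "mat_symmetric A"
    and ext: "extreme_point_pair (feasible1 n A) (P, M)"
  shows "nnz (P - M) \<le> (vec_space.rank n A)\<^sup>2"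
proof -
  have P: "P \<in> carrier_mat n n" and M: "M \<in> carrier_mat n n"
    using ext by (auto simp: extreme_point_pair_def feasible1_def)
  have "finite {(i,j). i < n \<and> j < n \<and> (P $$ (i,j) \<noteq> 0 \<or> M $$ (i,j) \<noteq> 0)}"
    by (rule finite_subset[of _ "{..<n} \<times> {..<n}"]) auto
  then have "nnz (P - M) \<le> card {(i,j). i < n \<and> j < n \<and> (P $$ (i,j) \<noteq> 0 \<or> M $$ (i,j) \<noteq> 0)}"
    using P M by (intro nnz_le_card[of _ n n]) auto
  then show ?thesis using extreme_feasible1_support_card_le[OF assms] by linarith
qed

lemma card_upper_triangle: "2 * card {(k,l). k \<le> l \<and> l < (r::nat)} = r * (r + 1)"
proof (induction r)
  case 0
  then show ?case by simp
next
  case (Suc r)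
  have "{(k,l). k \<le> l \<and> l < Suc r} = {(k,l). k \<le> l \<and> l < r} \<union> {..r} \<times> {r}" by auto
  moreover have "finite {(k,l). k \<le> l \<and> l < r}"
    by (rule finite_subset[of _ "{..r} \<times> {..<r}"]) auto
  ultimately have "card {(k,l). k \<le> l \<and> l < Suc r} = card {(k,l). k \<le> l \<and> l < r} + card ({..r} \<times> {r})"
    by (simp add: card_Un_disjoint disjoint_iff)
  then show ?case using Suc by (simp add: card_cartesian_product)
qed

lemma compression_symmetrized_supported_mat:
  fixes B :: "'a::comm_ring mat"
  assumes B: "B \<in> carrier_mat m n" and T: "T \<subseteq> {..<n} \<times> {..<n}" and kl: "k < m" "l < m"
  shows "(B * (supported_mat n T c + (supported_mat n T c)\<^sup>T) * B\<^sup>T) $$ (k,l)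
    = (\<Sum>p\<in>T. c p * (B $$ (k, fst p) * B $$ (l, snd p) + B $$ (l, fst p) * B $$ (k, snd p)))"
proof -
  have U: "supported_mat n T c \<in> carrier_mat n n" by (simp add: supported_mat_def)
  show ?thesis
    unfolding compression_symmetrize[OF B U kl]
    unfolding compression_supported_mat[OF B T kl] compression_supported_mat[OF B T kl(2,1)]
    by (simp add: sum.distrib algebra_simps)
qed

lemma nnz_le_twice_card:
  fixes H :: "real mat"
  assumes H: "H \<in> carrier_mat n n" and "mat_symmetric H" and "finite T"
    and upper: "\<forall>i j. i \<le> j \<longrightarrow> j < n \<longrightarrow> H $$ (i,j) \<noteq> 0 \<longrightarrow> (i,j) \<in> T"
  shows "nnz H \<le> 2 * card T"
proof -
  have "nnz H \<le> card (T \<union> prod.swap ` T)"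
  proof (rule nnz_le_card[OF H])
    show "finite (T \<union> prod.swap ` T)" using \<open>finite T\<close> by simp
    show "\<forall>i<n. \<forall>j<n. H $$ (i,j) \<noteq> 0 \<longrightarrow> (i,j) \<in> T \<union> prod.swap ` T"
    proof (intro allI impI)
      fix i j assume "i < n" "j < n" "H $$ (i,j) \<noteq> 0"
      moreover have "H $$ (j,i) = H $$ (i,j)"
        using \<open>mat_symmetric H\<close> \<open>i < n\<close> \<open>j < n\<close> by (simp add: mat_symmetric_iff[OF H])
      ultimately have "(i,j) \<in> T \<or> (j,i) \<in> T"
        using upper \<open>i < n\<close> \<open>j < n\<close> nat_le_linear by metis
      then show "(i,j) \<in> T \<union> prod.swap ` T" by (auto intro: image_eqI[of _ _ "(j,i)"])
    qed
  qed
  also have "\<dots> \<le> card T + card (prod.swap ` T)" by (rule card_Un_le)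
  also have "\<dots> \<le> 2 * card T" using card_image_le[OF \<open>finite T\<close>, of prod.swap] by linarith
  finally show ?thesis .
qed

lemma extreme_feasible2_support_card_le:
  fixes A P M :: "real mat"
  assumes A: "A \<in> carrier_mat n n" and sym: "mat_symmetric A"
    and ext: "extreme_point_pair (feasible2 n A) (P, M)"
  shows "card {(i,j). i \<le> j \<and> j < n \<and> (P $$ (i,j) \<noteq> 0 \<or> M $$ (i,j) \<noteq> 0)}
    \<le> card {(k,l). k \<le> l \<and> l < vec_space.rank n A}"
proof -
  define r where "r = vec_space.rank n A"
  obtain F G where F: "F \<in> carrier_mat n r" and G: "G \<in> carrier_mat r n" and AFG: "A = F * G"
    using rank_factorization[OF A] unfolding r_def by metis
  have "mat_symmetric P" and "mat_symmetric M" and P: "P \<in> carrier_mat n n" and M: "M \<in> carrier_mat n n"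
    using ext by (auto simp: extreme_point_pair_def feasible2_def)
  then have symP: "\<And>i j. i < n \<Longrightarrow> j < n \<Longrightarrow> P $$ (i,j) = P $$ (j,i)"
    and symM: "\<And>i j. i < n \<Longrightarrow> j < n \<Longrightarrow> M $$ (i,j) = M $$ (j,i)"
    by (simp_all add: mat_symmetric_iff)
  define T where "T = {(i,j). i \<le> j \<and> j < n \<and> (P $$ (i,j) \<noteq> 0 \<or> M $$ (i,j) \<noteq> 0)}"
  define Q where "Q = {(k,l). k \<le> l \<and> l < r}"
  have T: "T \<subseteq> {..<n} \<times> {..<n}" by (auto simp: T_def)
  \<comment> \<open>a symmetric direction is determined by its upper triangle, and its compression by G
    is a symmetric matrix, determined by its upper triangle as well\<close>
  define w where "w p q = G $$ (fst q, fst p) * G $$ (snd q, snd p)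
    + G $$ (snd q, fst p) * G $$ (fst q, snd p)" for p q :: "nat \<times> nat"
  have "card T \<le> card Q"
  proof (rule card_le_if_homogeneous_system_trivial[where w = w])
    fix c assume c: "\<forall>q\<in>Q. (\<Sum>p\<in>T. c p * w p q) = 0"
    define U where "U = supported_mat n T c"
    define D where "D = U + U\<^sup>T"
    have U: "U \<in> carrier_mat n n" by (simp add: U_def supported_mat_def)
    then have D: "D \<in> carrier_mat n n" by (simp add: D_def)
    have Dij: "D $$ (i,j) = U $$ (i,j) + U $$ (j,i)" if "i < n" "j < n" for i j
      using that U by (simp add: D_def)
    have entry: "(G * D * G\<^sup>T) $$ (k,l) = (\<Sum>p\<in>T. c p * w p (k,l))" if "k < r" "l < r" for k l
      unfolding D_def U_def compression_symmetrized_supported_mat[OF G T that] by (simp add: w_def)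
    have "(G * D * G\<^sup>T) $$ (k,l) = 0" if "k < r" "l < r" for k l
    proof (cases "k \<le> l")
      case True
      then show ?thesis using entry that c by (simp add: Q_def)
    next
      case False
      have "w p (k,l) = w p (l,k)" for p by (simp add: w_def)
      then show ?thesis using entry[OF that] c False that by (simp add: Q_def)
    qed
    then have "G * D * G\<^sup>T = 0\<^sub>m r r" using G D by (intro eq_matI) auto
    then have "A * D * A = 0\<^sub>m n n"
      by (rule sandwich_eq_0_if_compression_eq_0[OF F G AFG sym D])
    moreover have "mat_symmetric D" using Dij D by (simp add: mat_symmetric_iff)
    moreover have "\<forall>i<n. \<forall>j<n. P $$ (i,j) = 0 \<and> M $$ (i,j) = 0 \<longrightarrow> D $$ (i,j) = 0"
      using Dij symP symM by (auto simp: U_def supported_mat_def T_def)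
    ultimately have "D = 0\<^sub>m n n" by (intro extreme_feasible2_kernel[OF A ext D])
    moreover have "D $$ p = (if fst p = snd p then 2 * c p else c p)" if "p \<in> T" for p
      using that T Dij by (auto simp: U_def supported_mat_def T_def)
    ultimately show "\<forall>p\<in>T. c p = 0" using T by (fastforce split: if_splits)
  next
    show "finite Q" by (rule finite_subset[of _ "{..<r} \<times> {..<r}"]) (auto simp: Q_def)
  qed (use T in \<open>auto intro: finite_subset\<close>)
  then show ?thesis by (simp add: T_def Q_def r_def)
qed

lemma extreme_feasible2_nnz_le:
  fixes A P M :: "real mat"
  assumes A: "A \<in> carrier_mat n n" and sym: "mat_symmetric A"
    and ext: "extreme_point_pair (feasible2 n A) (P, M)"
  shows "nnz (P - M) \<le> (vec_space.rank n A)\<^sup>2 + vec_space.rank n A"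
proof -
  have P: "P \<in> carrier_mat n n" and M: "M \<in> carrier_mat n n"
    and "mat_symmetric P" and "mat_symmetric M"
    using ext by (auto simp: extreme_point_pair_def feasible2_def)
  then have "mat_symmetric (P - M)" by (simp add: mat_symmetric_iff[of _ n] minus_carrier_mat)
  moreover have "finite {(i,j). i \<le> j \<and> j < n \<and> (P $$ (i,j) \<noteq> 0 \<or> M $$ (i,j) \<noteq> 0)}"
    by (rule finite_subset[of _ "{..<n} \<times> {..<n}"]) auto
  ultimately have "nnz (P - M) \<le> 2 * card {(i,j). i \<le> j \<and> j < n \<and> (P $$ (i,j) \<noteq> 0 \<or> M $$ (i,j) \<noteq> 0)}"
    using P M by (intro nnz_le_twice_card[of _ n]) auto
  then show ?thesis
    using extreme_feasible2_support_card_le[OF assms] card_upper_triangle[of "vec_space.rank n A"]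
    by (simp add: power2_eq_square)
qed

section \<open>Extreme points attaining the bounds\<close>

definition mat_pos_part :: "real mat \<Rightarrow> real mat" where
  "mat_pos_part H = map_mat (\<lambda>x. max x 0) H"

definition mat_neg_part :: "real mat \<Rightarrow> real mat" where
  "mat_neg_part H = map_mat (\<lambda>x. max (- x) 0) H"

lemma mat_pos_neg_part:
  fixes H :: "real mat"
  assumes "H \<in> carrier_mat n m"
  shows "mat_pos_part H \<in> carrier_mat n m" and "mat_neg_part H \<in> carrier_mat n m"
    and "mat_nonneg (mat_pos_part H)" and "mat_nonneg (mat_neg_part H)"
    and "mat_pos_part H - mat_neg_part H = H"
  using assms by (auto intro!: eq_matI simp: mat_pos_part_def mat_neg_part_def mat_nonneg_def)

lemma mat_symmetric_pos_neg_part: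
  "mat_symmetric H \<Longrightarrow> mat_symmetric (mat_pos_part H) \<and> mat_symmetric (mat_neg_part H)"
  unfolding mat_symmetric_def mat_pos_part_def mat_neg_part_def by (metis map_mat_transpose)

lemma pos_neg_part_feasible1:
  fixes A H :: "real mat"
  assumes "H \<in> carrier_mat n n" and "A * H * A = A"
  shows "(mat_pos_part H, mat_neg_part H) \<in> feasible1 n A"
  using mat_pos_neg_part[OF assms(1)] assms(2) by (simp add: feasible1_def)

lemma convex_combination_eq_0_iff:
  fixes x y t :: real
  assumes "0 < t" and "t < 1" and "0 \<le> x" and "0 \<le> y"
  shows "t * x + (1 - t) * y = 0 \<longleftrightarrow> x = 0 \<and> y = 0"
  using assms by (subst add_nonneg_eq_0_iff) auto

lemma extreme_point_pair_pos_neg_partI: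
  fixes A H :: "real mat" and R :: "real mat \<Rightarrow> bool"
  assumes A: "A \<in> carrier_mat n n" and H: "H \<in> carrier_mat n n"
    and S: "S \<subseteq> feasible1 n A" and HS: "(mat_pos_part H, mat_neg_part H) \<in> S"
    and R: "\<And>Y Z Y' Z'. (Y, Z) \<in> S \<Longrightarrow> (Y', Z') \<in> S \<Longrightarrow> R ((Y - Z) - (Y' - Z'))"
    and kernel: "\<And>D. D \<in> carrier_mat n n \<Longrightarrow> R D
      \<Longrightarrow> \<forall>i<n. \<forall>j<n. H $$ (i,j) = 0 \<longrightarrow> D $$ (i,j) = 0 \<Longrightarrow> A * D * A = 0\<^sub>m n n \<Longrightarrow> D = 0\<^sub>m n n"
  shows "extreme_point_pair S (mat_pos_part H, mat_neg_part H)"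
  unfolding extreme_point_pair_def
proof (intro conjI ballI allI impI)
  fix y z and t :: real
  assume "y \<in> S" "z \<in> S" and comb: "0 < t \<and> t < 1 \<and> (mat_pos_part H, mat_neg_part H)
    = (t \<cdot>\<^sub>m fst y + (1 - t) \<cdot>\<^sub>m fst z, t \<cdot>\<^sub>m snd y + (1 - t) \<cdot>\<^sub>m snd z)"
  obtain Y Z Y' Z' where yz: "y = (Y, Z)" "z = (Y', Z')" by fastforce
  have YZ: "(Y, Z) \<in> feasible1 n A" "(Y', Z') \<in> feasible1 n A" using S \<open>y \<in> S\<close> \<open>z \<in> S\<close> yz by auto
  then have car: "Y \<in> carrier_mat n n" "Z \<in> carrier_mat n n" "Y' \<in> carrier_mat n n" "Z' \<in> carrier_mat n n"
    and nonneg: "mat_nonneg Y" "mat_nonneg Z" "mat_nonneg Y'" "mat_nonneg Z'"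
    by (auto simp: feasible1_def)
  have entries: "max (H $$ (i,j)) 0 = t * Y $$ (i,j) + (1 - t) * Y' $$ (i,j)"
    "max (- H $$ (i,j)) 0 = t * Z $$ (i,j) + (1 - t) * Z' $$ (i,j)" if "i < n" "j < n" for i j
    using comb yz that car H by (auto simp: mat_pos_part_def mat_neg_part_def
        dest!: arg_cong[of _ _ "\<lambda>X. X $$ (i,j)"])
  have Y0: "Y $$ (i,j) = 0 \<and> Y' $$ (i,j) = 0" if "i < n" "j < n" "H $$ (i,j) \<le> 0" for i j
    using entries(1)[OF that(1,2)] convex_combination_eq_0_iff[of t "Y $$ (i,j)" "Y' $$ (i,j)"]
      comb nonneg car that unfolding mat_nonneg_def by auto
  have Z0: "Z $$ (i,j) = 0 \<and> Z' $$ (i,j) = 0" if "i < n" "j < n" "H $$ (i,j) \<ge> 0" for i j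
    using entries(2)[OF that(1,2)] convex_combination_eq_0_iff[of t "Z $$ (i,j)" "Z' $$ (i,j)"]
      comb nonneg car that unfolding mat_nonneg_def by auto
  define D where "D = (Y - Z) - (Y' - Z')"
  have D: "D \<in> carrier_mat n n" using car by (simp add: D_def minus_carrier_mat)
  have "A * D * A = A * (Y - Z) * A - A * (Y' - Z') * A"
    unfolding D_def using car by (intro sandwich_diff[OF A]) auto
  also have "\<dots> = 0\<^sub>m n n" using YZ A by (auto simp: feasible1_def)
  finally have "D = 0\<^sub>m n n"
    using kernel[OF D] R[OF \<open>y \<in> S\<close>[unfolded yz] \<open>z \<in> S\<close>[unfolded yz]] Y0 Z0 car
    by (force simp: D_def)
  then have diff: "Y $$ (i,j) - Z $$ (i,j) = Y' $$ (i,j) - Z' $$ (i,j)" if "i < n" "j < n" for i j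
    using that car by (auto simp: D_def dest!: arg_cong[of _ _ "\<lambda>X. X $$ (i,j)"])
  have "Y $$ (i,j) = Y' $$ (i,j) \<and> Z $$ (i,j) = Z' $$ (i,j)" if "i < n" "j < n" for i j
  proof (cases "H $$ (i,j) \<ge> 0")
    case True
    then show ?thesis using Z0[OF that True] diff[OF that] by simp
  next
    case False
    then show ?thesis using Y0[OF that] diff[OF that] by simp
  qed
  then have "Y = Y' \<and> Z = Z'" using car by (auto intro!: eq_matI)
  then show "y = z" using yz by simp
qed (use HS in auto)

lemma sandwich_compression_assoc:
  fixes V B X :: "'a::comm_ring mat"
  assumes V: "V \<in> carrier_mat n r" and B: "B \<in> carrier_mat r r" and X: "X \<in> carrier_mat n n"
  shows "(V * B * V\<^sup>T) * X * (V * B * V\<^sup>T) = V * (B * (V\<^sup>T * X * V) * B) * V\<^sup>T"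
proof -
  have "(V * B * V\<^sup>T) * X * (V * B * V\<^sup>T) = (V * (B * V\<^sup>T)) * X * ((V * B) * V\<^sup>T)"
    using V B by simp
  also have "\<dots> = V * ((B * V\<^sup>T) * X * (V * B)) * V\<^sup>T"
    using V B X by (intro mult_sandwich_assoc) auto
  also have "(B * V\<^sup>T) * X * (V * B) = B * (V\<^sup>T * X * V) * B"
    using V B X by (intro mult_sandwich_assoc) auto
  finally show ?thesis .
qed

lemma mat_symmetric_sandwich:
  fixes V B :: "real mat"
  assumes V: "V \<in> carrier_mat n r" and B: "B \<in> carrier_mat r r" and "mat_symmetric B"
  shows "mat_symmetric (V * B * V\<^sup>T)"
proof -
  have VT: "V\<^sup>T \<in> carrier_mat r n" using V by simp
  have "(V * B * V\<^sup>T)\<^sup>T = V * (B\<^sup>T * V\<^sup>T)"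
    using transpose_mult[OF mult_carrier_mat[OF V B] VT] transpose_mult[OF V B] V B by simp
  also have "\<dots> = V * B * V\<^sup>T"
    using assms by (metis assoc_mult_mat mat_symmetric_def transpose_carrier_mat)
  finally show ?thesis unfolding mat_symmetric_def by simp
qed

lemma leading_block_sandwich:
  fixes V W :: "'a::comm_ring_1 mat"
  assumes V: "V \<in> carrier_mat n r" and W: "W \<in> carrier_mat r r" and "r \<le> n"
    and top: "\<And>i k. i < r \<Longrightarrow> k < r \<Longrightarrow> V $$ (i,k) = (if i = k then 1 else 0)"
    and "a < r" and "c < r"
  shows "(V * W * V\<^sup>T) $$ (a,c) = W $$ (a,c)"
proof -
  have "(V * W * V\<^sup>T) $$ (a,c) = (\<Sum>k<r. \<Sum>l<r. V $$ (a,k) * W $$ (k,l) * V $$ (c,l))"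
    using assms by (intro compression_index[OF V W]) auto
  also have "\<dots> = (\<Sum>k<r. \<Sum>l<r. (if a = k then 1 else 0) * W $$ (k,l) * (if c = l then 1 else 0))"
    using \<open>a < r\<close> \<open>c < r\<close> by (intro sum.cong refl) (simp add: top)
  also have "\<dots> = W $$ (a,c)"
    using \<open>a < r\<close> \<open>c < r\<close>
    by (simp add: if_distrib[of "\<lambda>x. x * _"] if_distrib[of "\<lambda>x. _ * x"] cong: if_cong)
  finally show ?thesis .
qed

lemma rank_sandwich:
  fixes V B :: "'a::field mat"
  assumes V: "V \<in> carrier_mat n r" and B: "B \<in> carrier_mat r r" and "r \<le> n" and "det B \<noteq> 0"
    and top: "\<And>i k. i < r \<Longrightarrow> k < r \<Longrightarrow> V $$ (i,k) = (if i = k then 1 else 0)"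
  shows "vec_space.rank n (V * B * V\<^sup>T) = r"
proof (rule antisym)
  have "V * B * V\<^sup>T = V * (B * V\<^sup>T)" using V B by simp
  then show "vec_space.rank n (V * B * V\<^sup>T) \<le> r"
    using rank_mult_le[OF V, of "B * V\<^sup>T" n] V B by simp
  have "(V * B * V\<^sup>T) $$ (i,j) = B $$ (i,j)" if "i < r" "j < r" for i j
    using leading_block_sandwich[OF V B] assms that by blast
  then have "mat r r (\<lambda>(i,j). (V * B * V\<^sup>T) $$ (i,j)) = B"
    using B by (intro eq_matI) auto
  then show "r \<le> vec_space.rank n (V * B * V\<^sup>T)"
    using assms by (intro rank_ge_leading_minor[of _ n n]) auto
qed

lemma sandwich_inverse_solution:
  fixes V B C H :: "'a::comm_ring_1 mat"
  assumes V: "V \<in> carrier_mat n r" and B: "B \<in> carrier_mat r r" and C: "C \<in> carrier_mat r r"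
    and BC: "B * C = 1\<^sub>m r" and H: "H \<in> carrier_mat n n" and VHV: "V\<^sup>T * H * V = C"
  shows "(V * B * V\<^sup>T) * H * (V * B * V\<^sup>T) = V * B * V\<^sup>T"
  using sandwich_compression_assoc[OF V B H] VHV BC B C by simp

lemma extreme_point_pair_sandwichI:
  fixes V B C H :: "real mat" and R :: "real mat \<Rightarrow> bool"
  assumes V: "V \<in> carrier_mat n r" and B: "B \<in> carrier_mat r r" and C: "C \<in> carrier_mat r r"
    and BC: "B * C = 1\<^sub>m r" and H: "H \<in> carrier_mat n n" and "r \<le> n"
    and top: "\<And>i k. i < r \<Longrightarrow> k < r \<Longrightarrow> V $$ (i,k) = (if i = k then 1 else 0)"
    and S: "S \<subseteq> feasible1 n (V * B * V\<^sup>T)" and HS: "(mat_pos_part H, mat_neg_part H) \<in> S"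
    and R: "\<And>Y Z Y' Z'. (Y, Z) \<in> S \<Longrightarrow> (Y', Z') \<in> S \<Longrightarrow> R ((Y - Z) - (Y' - Z'))"
    and kernel: "\<And>D. D \<in> carrier_mat n n \<Longrightarrow> R D
      \<Longrightarrow> \<forall>i<n. \<forall>j<n. H $$ (i,j) = 0 \<longrightarrow> D $$ (i,j) = 0 \<Longrightarrow> V\<^sup>T * D * V = 0\<^sub>m r r \<Longrightarrow> D = 0\<^sub>m n n"
  shows "extreme_point_pair S (mat_pos_part H, mat_neg_part H)"
proof (rule extreme_point_pair_pos_neg_partI[where A = "V * B * V\<^sup>T" and R = R])
  fix D assume D: "D \<in> carrier_mat n n" and "R D"
    and supp: "\<forall>i<n. \<forall>j<n. H $$ (i,j) = 0 \<longrightarrow> D $$ (i,j) = 0"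
    and ADA: "V * B * V\<^sup>T * D * (V * B * V\<^sup>T) = 0\<^sub>m n n"
  define W where "W = V\<^sup>T * D * V"
  have W: "W \<in> carrier_mat r r" using V D by (simp add: W_def)
  \<comment> \<open>the leading block of A D A is B W B\<close>
  have "B * W * B = 0\<^sub>m r r"
  proof (rule eq_matI)
    fix a c assume "a < dim_row (0\<^sub>m r r)" "c < dim_col (0\<^sub>m r r)"
    then have "a < r" "c < r" by auto
    then have "(B * W * B) $$ (a,c) = (V * (B * W * B) * V\<^sup>T) $$ (a,c)"
      using V B W assms by (intro leading_block_sandwich[symmetric]) auto
    then show "(B * W * B) $$ (a,c) = 0\<^sub>m r r $$ (a,c)"
      using ADA sandwich_compression_assoc[OF V B D] \<open>a < r\<close> \<open>c < r\<close> \<open>r \<le> n\<close>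
      by (simp add: W_def)
  qed (use B W in auto)
  have CB: "C * B = 1\<^sub>m r" using mat_mult_left_right_inverse[OF B C BC] .
  have "W = (C * B) * W * (B * C)" using W by (simp add: CB BC)
  also have "\<dots> = C * (B * W * B) * C" using B C W by (intro mult_sandwich_assoc) auto
  finally have "V\<^sup>T * D * V = 0\<^sub>m r r"
    using \<open>B * W * B = 0\<^sub>m r r\<close> C by (simp add: W_def)
  then show "D = 0\<^sub>m n n" using kernel D \<open>R D\<close> supp by blast
qed (use V B H S HS R in auto)

definition embed_mat :: "nat \<Rightarrow> nat \<Rightarrow> real mat" where
  "embed_mat n r = mat n r (\<lambda>(i,k). if i = k then 1 else 0)"

lemma embed_mat_compression:
  fixes X :: "real mat"
  assumes "X \<in> carrier_mat n n" and "r \<le> n" and "k < r" and "l < r"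
  shows "((embed_mat n r)\<^sup>T * X * embed_mat n r) $$ (k,l) = X $$ (k,l)"
proof -
  have V: "embed_mat n r \<in> carrier_mat n r" by (simp add: embed_mat_def)
  show ?thesis
    unfolding compression_transpose_index[OF V assms(1,3,4)]
    using assms
    by (simp add: embed_mat_def if_distrib[of "\<lambda>x. x * _"] if_distrib[of "\<lambda>x. _ * x"]
        cong: if_cong)
qed

definition star_mat :: "nat \<Rightarrow> nat \<Rightarrow> real mat" where
  "star_mat n r = mat n r (\<lambda>(i,k). if i = k \<or> i = r then 1 else 0)"

lemma star_mat_compression:
  fixes X :: "real mat"
  assumes "X \<in> carrier_mat n n" and "r < n" and "k < r" and "l < r"
  shows "((star_mat n r)\<^sup>T * X * star_mat n r) $$ (k,l)
    = X $$ (k,l) + X $$ (k,r) + X $$ (r,l) + X $$ (r,r)"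
proof -
  have two: "(\<Sum>i<n. (if i = k \<or> i = r then 1 else 0) * f i) = f k + f r"
    if "k < r" for k and f :: "nat \<Rightarrow> real"
  proof -
    have "(\<Sum>i<n. (if i = k \<or> i = r then 1 else 0) * f i) = (\<Sum>i\<in>{k, r}. f i)"
      using that \<open>r < n\<close> by (intro sum.mono_neutral_cong_right) auto
    then show ?thesis using that by simp
  qed
  have V: "star_mat n r \<in> carrier_mat n r" by (simp add: star_mat_def)
  have "((star_mat n r)\<^sup>T * X * star_mat n r) $$ (k,l)
    = (\<Sum>i<n. (if i = k \<or> i = r then 1 else 0) *
        (\<Sum>j<n. (if j = l \<or> j = r then 1 else 0) * X $$ (i,j)))"
    unfolding compression_transpose_index[OF V assms(1,3,4)] using assms
    by (simp add: star_mat_def sum_distrib_left mult_ac)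
  also have "\<dots> = (\<Sum>i<n. (if i = k \<or> i = r then 1 else 0) * (X $$ (i,l) + X $$ (i,r)))"
    using two[OF \<open>l < r\<close>] by simp
  also have "\<dots> = X $$ (k,l) + X $$ (k,r) + X $$ (r,l) + X $$ (r,r)"
    using two[OF \<open>k < r\<close>] by simp
  finally show ?thesis .
qed

definition one_plus_ones_mat :: "nat \<Rightarrow> real mat" where
  "one_plus_ones_mat r = mat r r (\<lambda>(i,j). if i = j then 2 else 1)"

definition one_plus_ones_inv :: "nat \<Rightarrow> real mat" where
  "one_plus_ones_inv r = mat r r (\<lambda>(i,j). (if i = j then 1 else 0) - 1 / (real r + 1))"

lemma one_plus_ones_mult_inv: "one_plus_ones_mat r * one_plus_ones_inv r = 1\<^sub>m r"
proof (rule eq_matI)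
  fix i j assume "i < dim_row (1\<^sub>m r)" "j < dim_col (1\<^sub>m r)"
  then have i: "i < r" and j: "j < r" by auto
  define s where "s = 1 / (real r + 1)"
  have "(one_plus_ones_mat r * one_plus_ones_inv r) $$ (i,j)
      = (\<Sum>k<r. (if i = k then 2 else 1) * ((if k = j then 1 else 0) - s))"
    using i j
    by (simp add: one_plus_ones_mat_def one_plus_ones_inv_def scalar_prod_def atLeast0LessThan s_def)
  also have "\<dots> = (\<Sum>k<r. ((if k = j then 1 else 0) - s) + (if k = i then (if k = j then 1 else 0) - s else 0))"
    by (intro sum.cong) auto
  also have "\<dots> = 1 - real r * s + ((if i = j then 1 else 0) - s)"
    using i j by (simp add: sum.distrib sum_subtractf)
  also have "\<dots> = (if i = j then 1 else 0)" by (simp add: s_def field_simps)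
  finally show "(one_plus_ones_mat r * one_plus_ones_inv r) $$ (i,j) = 1\<^sub>m r $$ (i,j)"
    using i j by simp
qed (auto simp: one_plus_ones_mat_def one_plus_ones_inv_def)

definition block_solution :: "nat \<Rightarrow> nat \<Rightarrow> real mat" where
  "block_solution n r = mat n n (\<lambda>(i,j). if i < r \<and> j < r then one_plus_ones_inv r $$ (i,j) else 0)"

lemma block_solution_compression:
  assumes "r \<le> n"
  shows "(embed_mat n r)\<^sup>T * block_solution n r * embed_mat n r = one_plus_ones_inv r"
proof -
  have H: "block_solution n r \<in> carrier_mat n n" by (simp add: block_solution_def)
  have "((embed_mat n r)\<^sup>T * block_solution n r * embed_mat n r) $$ (k,l) = one_plus_ones_inv r $$ (k,l)"
    if "k < r" "l < r" for k l
    using embed_mat_compression[OF H assms that] that assms by (simp add: block_solution_def)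
  then show ?thesis by (intro eq_matI) (auto simp: embed_mat_def one_plus_ones_inv_def)
qed

lemma block_solution_kernel:
  fixes D :: "real mat"
  assumes "r \<le> n" and D: "D \<in> carrier_mat n n"
    and supp: "\<forall>i<n. \<forall>j<n. block_solution n r $$ (i,j) = 0 \<longrightarrow> D $$ (i,j) = 0"
    and VDV: "(embed_mat n r)\<^sup>T * D * embed_mat n r = 0\<^sub>m r r"
  shows "D = 0\<^sub>m n n"
proof -
  have "D $$ (i,j) = 0" if "i < n" "j < n" for i j
  proof (cases "i < r \<and> j < r")
    case True
    then show ?thesis using VDV embed_mat_compression[OF D \<open>r \<le> n\<close>, of i j] by simp
  next
    case False
    then show ?thesis using supp that by (auto simp: block_solution_def)
  qed
  then show ?thesis using D by (intro eq_matI) auto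
qed

lemma nnz_block_solution:
  assumes "r \<le> n"
  shows "nnz (block_solution n r) = r\<^sup>2"
proof -
  have "one_plus_ones_inv r $$ (i,j) \<noteq> 0" if "i < r" "j < r" for i j
    using that by (auto simp: one_plus_ones_inv_def field_simps)
  then have "{(i,j). i < dim_row (block_solution n r) \<and> j < dim_col (block_solution n r)
      \<and> block_solution n r $$ (i,j) \<noteq> 0} = {..<r} \<times> {..<r}"
    using assms by (auto simp: block_solution_def split: if_splits)
  then show ?thesis by (simp add: nnz_def card_cartesian_product power2_eq_square)
qed

lemma extreme_feasible1_nnz_sharp:
  assumes "r \<le> n"
  shows "\<exists>(A :: real mat) P M. A \<in> carrier_mat n n \<and> mat_symmetric A \<and> vec_space.rank n A = r
    \<and> extreme_point_pair (feasible1 n A) (P, M) \<and> nnz (P - M) = r\<^sup>2"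
proof -
  define V where "V = embed_mat n r"
  define B where "B = one_plus_ones_mat r"
  define C where "C = one_plus_ones_inv r"
  define H where "H = block_solution n r"
  define A where "A = V * B * V\<^sup>T"
  have V: "V \<in> carrier_mat n r" and B: "B \<in> carrier_mat r r" and C: "C \<in> carrier_mat r r"
    and H: "H \<in> carrier_mat n n"
    by (simp_all add: V_def embed_mat_def B_def one_plus_ones_mat_def C_def one_plus_ones_inv_def
        H_def block_solution_def)
  have A: "A \<in> carrier_mat n n" using V B by (simp add: A_def)
  have top: "V $$ (i,k) = (if i = k then 1 else 0)" if "i < r" "k < r" for i k
    using that \<open>r \<le> n\<close> by (simp add: V_def embed_mat_def)
  have BC: "B * C = 1\<^sub>m r" unfolding B_def C_def by (rule one_plus_ones_mult_inv)
  then have "det B \<noteq> 0" using det_mult[OF B C] by auto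
  have "mat_symmetric B" unfolding mat_symmetric_iff[OF B] by (simp add: B_def one_plus_ones_mat_def)
  have "A * H * A = A"
    using sandwich_inverse_solution[OF V B C BC H] block_solution_compression[OF \<open>r \<le> n\<close>]
    by (simp add: A_def V_def H_def C_def)
  then have HS: "(mat_pos_part H, mat_neg_part H) \<in> feasible1 n A"
    by (rule pos_neg_part_feasible1[OF H])
  have "extreme_point_pair (feasible1 n A) (mat_pos_part H, mat_neg_part H)"
    using block_solution_kernel[OF \<open>r \<le> n\<close>]
    by (intro extreme_point_pair_sandwichI[OF V B C BC H \<open>r \<le> n\<close> top _ HS[unfolded A_def],
          where R = "\<lambda>_. True", folded A_def]) (auto simp: V_def H_def)
  moreover have "mat_symmetric A"
    unfolding A_def by (rule mat_symmetric_sandwich[OF V B \<open>mat_symmetric B\<close>])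
  moreover have "vec_space.rank n A = r"
    unfolding A_def by (rule rank_sandwich[OF V B \<open>r \<le> n\<close> \<open>det B \<noteq> 0\<close> top])
  ultimately show ?thesis
    using A mat_pos_neg_part(5)[OF H] nnz_block_solution[OF \<open>r \<le> n\<close>] by (metis H_def)
qed

definition star_solution :: "nat \<Rightarrow> nat \<Rightarrow> real mat" where
  "star_solution n r = mat n n (\<lambda>(i,j).
     if i < r \<and> j < r then (if i = j then 0 else -1)
     else if (i < r \<and> j = r) \<or> (i = r \<and> j < r) then 1/2 else 0)"

lemma star_solution_compression:
  assumes "r < n"
  shows "(star_mat n r)\<^sup>T * star_solution n r * star_mat n r = 1\<^sub>m r"
proof -
  have H: "star_solution n r \<in> carrier_mat n n" by (simp add: star_solution_def)
  have "((star_mat n r)\<^sup>T * star_solution n r * star_mat n r) $$ (k,l) = 1\<^sub>m r $$ (k,l)"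
    if "k < r" "l < r" for k l
    using star_mat_compression[OF H assms that] that assms by (simp add: star_solution_def)
  then show ?thesis by (intro eq_matI) (auto simp: star_mat_def)
qed

lemma star_solution_kernel:
  fixes D :: "real mat"
  assumes "r < n" and D: "D \<in> carrier_mat n n" and "mat_symmetric D"
    and supp: "\<forall>i<n. \<forall>j<n. star_solution n r $$ (i,j) = 0 \<longrightarrow> D $$ (i,j) = 0"
    and VDV: "(star_mat n r)\<^sup>T * D * star_mat n r = 0\<^sub>m r r"
  shows "D = 0\<^sub>m n n"
proof -
  have sym: "D $$ (i,j) = D $$ (j,i)" if "i < n" "j < n" for i j
    using \<open>mat_symmetric D\<close> that by (simp add: mat_symmetric_iff[OF D])
  have eq: "D $$ (k,l) + D $$ (k,r) + D $$ (r,l) + D $$ (r,r) = 0" if "k < r" "l < r" for k l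
    using star_mat_compression[OF D \<open>r < n\<close> that] VDV that by simp
  have diag: "D $$ (k,k) = 0" "D $$ (r,r) = 0" if "k < r" for k
    using supp that \<open>r < n\<close> by (auto simp: star_solution_def)
  \<comment> \<open>the diagonal equations kill the last row and column, the others the leading block\<close>
  have last: "D $$ (k,r) = 0" "D $$ (r,k) = 0" if "k < r" for k
    using eq[OF that that] diag[OF that] sym[of k r] that \<open>r < n\<close> by auto
  have "D $$ (i,j) = 0" if "i < n" "j < n" for i j
  proof (cases "i < r \<and> j < r")
    case True
    then show ?thesis using eq[of i j] last[of i] last[of j] diag by auto
  next
    case False
    then show ?thesis using supp last that by (auto simp: star_solution_def split: if_splits)
  qed
  then show ?thesis using D by (intro eq_matI) auto
qed

lemma nnz_star_solution:
  assumes "r < n"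
  shows "nnz (star_solution n r) = r\<^sup>2 + r"
proof -
  let ?Off = "{..<r} \<times> {..<r} - (\<lambda>i. (i,i)) ` {..<r}"
  have "{(i,j). i < dim_row (star_solution n r) \<and> j < dim_col (star_solution n r)
      \<and> star_solution n r $$ (i,j) \<noteq> 0} = ?Off \<union> {..<r} \<times> {r} \<union> {r} \<times> {..<r}"
    using assms by (auto simp: star_solution_def split: if_splits)
  moreover have "card ?Off = r * r - r"
    by (subst card_Diff_subset) (auto simp: card_image inj_on_def card_cartesian_product)
  moreover have "card (?Off \<union> {..<r} \<times> {r} \<union> {r} \<times> {..<r}) = card ?Off + r + r"
    by (subst card_Un_disjoint, auto)+
  ultimately show ?thesis
    by (simp add: nnz_def power2_eq_square)
qed

lemma extreme_feasible2_nnz_sharp: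
  assumes "r < n"
  shows "\<exists>(A :: real mat) P M. A \<in> carrier_mat n n \<and> mat_symmetric A \<and> vec_space.rank n A = r
    \<and> extreme_point_pair (feasible2 n A) (P, M) \<and> nnz (P - M) = r\<^sup>2 + r"
proof -
  define V where "V = star_mat n r"
  define H where "H = star_solution n r"
  define A where "A = V * 1\<^sub>m r * V\<^sup>T"
  have V: "V \<in> carrier_mat n r" and H: "H \<in> carrier_mat n n"
    by (simp_all add: V_def star_mat_def H_def star_solution_def)
  have "r \<le> n" using assms by simp
  have top: "V $$ (i,k) = (if i = k then 1 else 0)" if "i < r" "k < r" for i k
    using that assms by (simp add: V_def star_mat_def)
  have "mat_symmetric H" unfolding mat_symmetric_iff[OF H] by (auto simp: H_def star_solution_def)
  have one: "1\<^sub>m r \<in> carrier_mat r r" "1\<^sub>m r * 1\<^sub>m r = (1\<^sub>m r :: real mat)" by simp_all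
  have A: "A \<in> carrier_mat n n" using V by (simp add: A_def)
  have "A * H * A = A"
    using sandwich_inverse_solution[OF V one(1) one(1) one(2) H] star_solution_compression[OF assms]
    by (simp add: A_def V_def H_def)
  then have HS: "(mat_pos_part H, mat_neg_part H) \<in> feasible2 n A"
    using pos_neg_part_feasible1[OF H] mat_symmetric_pos_neg_part[OF \<open>mat_symmetric H\<close>]
    by (simp add: feasible2_iff)
  have "extreme_point_pair (feasible2 n A) (mat_pos_part H, mat_neg_part H)"
  proof (rule extreme_point_pair_sandwichI[OF V one(1) one(1) one(2) H \<open>r \<le> n\<close> top _ HS[unfolded A_def],
        where R = mat_symmetric, folded A_def])
    show "feasible2 n A \<subseteq> feasible1 n A" by (auto simp: feasible2_iff)
    fix Y Z Y' Z' assume "(Y, Z) \<in> feasible2 n A" "(Y', Z') \<in> feasible2 n A"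
    then have "Y \<in> carrier_mat n n" "Z \<in> carrier_mat n n" "Y' \<in> carrier_mat n n" "Z' \<in> carrier_mat n n"
      "mat_symmetric Y" "mat_symmetric Z" "mat_symmetric Y'" "mat_symmetric Z'"
      by (auto simp: feasible2_def)
    then show "mat_symmetric (Y - Z - (Y' - Z'))"
      by (simp add: mat_symmetric_iff[of _ n] minus_carrier_mat)
  next
    fix D :: "real mat" assume "D \<in> carrier_mat n n" "mat_symmetric D"
      "\<forall>i<n. \<forall>j<n. H $$ (i,j) = 0 \<longrightarrow> D $$ (i,j) = 0" "V\<^sup>T * D * V = 0\<^sub>m r r"
    then show "D = 0\<^sub>m n n" using star_solution_kernel[OF assms] by (simp add: V_def H_def)
  qed
  moreover have "mat_symmetric A"
    unfolding A_def by (rule mat_symmetric_sandwich[OF V one(1)]) (simp add: mat_symmetric_def)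
  moreover have "vec_space.rank n A = r"
    unfolding A_def by (rule rank_sandwich[OF V one(1) \<open>r \<le> n\<close> _ top]) simp
  ultimately show ?thesis
    using A mat_pos_neg_part(5)[OF H] nnz_star_solution[OF assms] by (metis H_def)
qed

theorem proposition2p1:
  shows
   "(\<forall>n (A :: real mat) P M. A \<in> carrier_mat n n \<and> mat_symmetric A \<and>
        extreme_point_pair (feasible1 n A) (P, M) \<longrightarrow>
        nnz (P - M) \<le> (vec_space.rank n A)\<^sup>2)
    \<and> (\<forall>n r. 1 \<le> r \<and> r \<le> n \<longrightarrow>
        (\<exists>(A :: real mat) P M. A \<in> carrier_mat n n \<and> mat_symmetric A \<and>
           vec_space.rank n A = r \<and>
           extreme_point_pair (feasible1 n A) (P, M) \<and> nnz (P - M) = r\<^sup>2))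
    \<and> (\<forall>n (A :: real mat) P M. A \<in> carrier_mat n n \<and> mat_symmetric A \<and>
        extreme_point_pair (feasible2 n A) (P, M) \<longrightarrow>
        nnz (P - M) \<le> (vec_space.rank n A)\<^sup>2 + vec_space.rank n A)
    \<and> (\<forall>n r. 3 \<le> r \<and> r + 2 \<le> n \<longrightarrow>
        (\<exists>(A :: real mat) P M. A \<in> carrier_mat n n \<and> mat_symmetric A \<and>
           vec_space.rank n A = r \<and>
           extreme_point_pair (feasible2 n A) (P, M) \<and> nnz (P - M) = r\<^sup>2 + r))"
proof -
  have "r < n" if "r + 2 \<le> n" for r n :: nat using that by simp
  then show ?thesis
    by (intro conjI allI impI)
      (blast intro: extreme_feasible1_nnz_le extreme_feasible1_nnz_sharp
        extreme_feasible2_nnz_le extreme_feasible2_nnz_sharp)+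
qed

end
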